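(* Let $G$ be a connected $n$-vertex connected-domishold graph that is not complete. Let $\nu_c$ be the number of inclusion-minimal connected dominating sets of $G$ and $\nu_s$ the number of minimal cutsets of $G$. Then $\nu_s\le (n-2)\nu_c$ and $\nu_c\le (n-2)\nu_s$.
   Context: A connected dominating set of a connected graph $G$ is a set $S\subseteq V(G)$ such that every vertex outside $S$ has a neighbor in $S$ and $G[S]$ is connected. $G$ is connected-domishold if there exist $w:V(G)\to\mathbb{R}_{\ge0}$, $t\in\mathbb{R}_{\ge0}$ such that for all $S\subseteq V(G)$, $\sum_{x\in S}w(x)\ge t$ iff $S$ is a connected dominating set. A cutset is a set $S\subseteq V(G)$ such that $G-S$ is disconnected; it is minimal if it contains no other cutset. *)

theory Defs
  imports Complex_Main
begin

definition simple_graph :: "'a set \<Rightarrow> ('a \<Rightarrow> 'a \<Rightarrow> bool) \<Rightarrow> bool" where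
  "simple_graph V E \<longleftrightarrow> finite V \<and> (\<forall>x y. E x y \<longrightarrow> x \<in> V \<and> y \<in> V) \<and>
     (\<forall>x y. E x y \<longrightarrow> E y x) \<and> (\<forall>x. \<not> E x x)"

definition induced_connected :: "('a \<Rightarrow> 'a \<Rightarrow> bool) \<Rightarrow> 'a set \<Rightarrow> bool" where
  "induced_connected E S \<longleftrightarrow> S \<noteq> {} \<and>
     (\<forall>x\<in>S. \<forall>y\<in>S. (\<lambda>u v. E u v \<and> u \<in> S \<and> v \<in> S)\<^sup>*\<^sup>* x y)"

definition connected_graph :: "'a set \<Rightarrow> ('a \<Rightarrow> 'a \<Rightarrow> bool) \<Rightarrow> bool" where
  "connected_graph V E \<longleftrightarrow> induced_connected E V"

definition complete_graph :: "'a set \<Rightarrow> ('a \<Rightarrow> 'a \<Rightarrow> bool) \<Rightarrow> bool" where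
  "complete_graph V E \<longleftrightarrow> (\<forall>x\<in>V. \<forall>y\<in>V. x \<noteq> y \<longrightarrow> E x y)"

definition dominating :: "'a set \<Rightarrow> ('a \<Rightarrow> 'a \<Rightarrow> bool) \<Rightarrow> 'a set \<Rightarrow> bool" where
  "dominating V E S \<longleftrightarrow> S \<subseteq> V \<and> (\<forall>v\<in>V - S. \<exists>u\<in>S. E v u)"

definition connected_dominating_set :: "'a set \<Rightarrow> ('a \<Rightarrow> 'a \<Rightarrow> bool) \<Rightarrow> 'a set \<Rightarrow> bool" where
  "connected_dominating_set V E S \<longleftrightarrow> dominating V E S \<and> induced_connected E S"

definition minimal_cds :: "'a set \<Rightarrow> ('a \<Rightarrow> 'a \<Rightarrow> bool) \<Rightarrow> 'a set \<Rightarrow> bool" where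
  "minimal_cds V E S \<longleftrightarrow> connected_dominating_set V E S \<and>
     (\<forall>T. T \<subset> S \<longrightarrow> \<not> connected_dominating_set V E T)"

definition connected_domishold :: "'a set \<Rightarrow> ('a \<Rightarrow> 'a \<Rightarrow> bool) \<Rightarrow> bool" where
  "connected_domishold V E \<longleftrightarrow> (\<exists>(w::'a \<Rightarrow> real) (t::real).
     (\<forall>x\<in>V. w x \<ge> 0) \<and> t \<ge> 0 \<and>
     (\<forall>S. S \<subseteq> V \<longrightarrow> ((\<Sum>x\<in>S. w x) \<ge> t \<longleftrightarrow> connected_dominating_set V E S)))"

definition cutset :: "'a set \<Rightarrow> ('a \<Rightarrow> 'a \<Rightarrow> bool) \<Rightarrow> 'a set \<Rightarrow> bool" where
  "cutset V E S \<longleftrightarrow> S \<subseteq> V \<and> V - S \<noteq> {} \<and> \<not> induced_connected E (V - S)"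

definition minimal_cutset :: "'a set \<Rightarrow> ('a \<Rightarrow> 'a \<Rightarrow> bool) \<Rightarrow> 'a set \<Rightarrow> bool" where
  "minimal_cutset V E S \<longleftrightarrow> cutset V E S \<and> (\<forall>T. T \<subset> S \<longrightarrow> \<not> cutset V E T)"

end

theory Submission
  imports Defs "HOL-Library.Product_Lexorder"
begin

text \<open>The connected dominating sets of a connected-domishold graph form a threshold
family, and threshold families are regular: in a member, any vertex may be exchanged
for one of at least the same weight. Order the vertices by decreasing weight. For a
regular up-closed family, every maximal non-member \<open>F\<close> is determined by a minimal
member \<open>T\<close> and an element \<open>j\<in>T\<close>: \<open>F\<close> consists of the elements of \<open>T\<close> before \<open>j\<close>
and all vertices after \<open>j\<close>. Hence there are at most \<open>m\<close> times as many maximal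
non-members as minimal members, where \<open>m\<close> bounds the size of the minimal members.
Complements of maximal non-members are the minimal members of the dual family, which
is again regular; for connected dominating sets its minimal members are exactly the
minimal cutsets. Finally, minimal connected dominating sets and minimal cutsets of a
non-complete graph miss at least two vertices.\<close>

section \<open>Regular up-closed set families\<close>

definition up_closed :: "'a set \<Rightarrow> ('a set \<Rightarrow> bool) \<Rightarrow> bool" where
  "up_closed U P \<longleftrightarrow> (\<forall>S S'. P S \<longrightarrow> S \<subseteq> S' \<longrightarrow> S' \<subseteq> U \<longrightarrow> P S')"

text \<open>Regularity of monotone Boolean functions, with elements earlier in the \<open>key\<close>
order being the stronger ones.\<close>

definition regular :: "'a set \<Rightarrow> ('a \<Rightarrow> 'b::linorder) \<Rightarrow> ('a set \<Rightarrow> bool) \<Rightarrow> bool" where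
  "regular U key P \<longleftrightarrow> (\<forall>S x y. S \<subseteq> U \<longrightarrow> P S \<longrightarrow> x \<in> S \<longrightarrow> y \<in> U \<longrightarrow> y \<notin> S \<longrightarrow>
     key y < key x \<longrightarrow> P (insert y (S - {x})))"

definition minimal_true :: "'a set \<Rightarrow> ('a set \<Rightarrow> bool) \<Rightarrow> 'a set \<Rightarrow> bool" where
  "minimal_true U P T \<longleftrightarrow> T \<subseteq> U \<and> P T \<and> (\<forall>T'. T' \<subset> T \<longrightarrow> \<not> P T')"

definition maximal_false :: "'a set \<Rightarrow> ('a set \<Rightarrow> bool) \<Rightarrow> 'a set \<Rightarrow> bool" where
  "maximal_false U P F \<longleftrightarrow> F \<subseteq> U \<and> \<not> P F \<and> (\<forall>F'. F \<subset> F' \<longrightarrow> F' \<subseteq> U \<longrightarrow> P F')"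

definition dual_family :: "'a set \<Rightarrow> ('a set \<Rightarrow> bool) \<Rightarrow> 'a set \<Rightarrow> bool" where
  "dual_family U P C \<longleftrightarrow> C \<subseteq> U \<and> \<not> P (U - C)"

lemma ex_greatest_key:
  fixes key :: "'a \<Rightarrow> 'b::linorder"
  assumes "finite S" "S \<noteq> {}"
  shows "\<exists>j\<in>S. \<forall>y\<in>S. key y \<le> key j"
proof -
  have "Max (key ` S) \<in> key ` S" using assms by simp
  then obtain j where "j \<in> S" "key j = Max (key ` S)" by auto
  moreover have "\<forall>y\<in>S. key y \<le> Max (key ` S)" using assms by simp
  ultimately show ?thesis by metis
qed

lemma up_closedD:
  "up_closed U P \<Longrightarrow> P S \<Longrightarrow> S \<subseteq> S' \<Longrightarrow> S' \<subseteq> U \<Longrightarrow> P S'"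
  unfolding up_closed_def by blast

lemma regularD:
  "regular U key P \<Longrightarrow> S \<subseteq> U \<Longrightarrow> P S \<Longrightarrow> x \<in> S \<Longrightarrow> y \<in> U \<Longrightarrow> y \<notin> S \<Longrightarrow>
    key y < key x \<Longrightarrow> P (insert y (S - {x}))"
  unfolding regular_def by blast

lemma minimal_trueI_regular:
  fixes key :: "'a \<Rightarrow> 'b::linorder"
  assumes up: "up_closed U P" and reg: "regular U key P" and inj: "inj_on key U"
    and T: "T \<subseteq> U" "P T" and k: "k \<in> T" "\<forall>x\<in>T. key x \<le> key k"
    and not_P: "\<not> P (T - {k})"
  shows "minimal_true U P T"
  unfolding minimal_true_def
proof (intro conjI allI impI notI)
  fix T' assume "T' \<subset> T" "P T'"
  then obtain x where x: "x \<in> T" "x \<notin> T'" and "T' \<subseteq> T - {x}" by blast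
  then have P_x: "P (T - {x})" using up_closedD[OF up \<open>P T'\<close>] T by blast
  show False
  proof (cases "x = k")
    case True
    then show False using P_x not_P by simp
  next
    case False
    then have "key x \<noteq> key k" using inj x(1) k(1) T by (auto dest: inj_onD)
    then have "key x < key k" using k(2) x(1) by (simp add: le_neq_trans)
    then have "P (insert x (T - {x} - {k}))"
      using regularD[OF reg _ P_x] T x k \<open>x \<noteq> k\<close> by blast
    also have "insert x (T - {x} - {k}) = T - {k}" using x \<open>x \<noteq> k\<close> by blast
    finally show False using not_P by simp
  qed
qed (use T in auto)

lemma maximal_false_decomposition:
  fixes key :: "'a \<Rightarrow> 'b::linorder"
  assumes fin: "finite U" and inj: "inj_on key U" and up: "up_closed U P"
    and reg: "regular U key P" and P_U: "P U" and F: "maximal_false U P F"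
  shows "\<exists>T j. minimal_true U P T \<and> j \<in> T \<and>
           F = {x\<in>T. key x < key j} \<union> {y\<in>U. key j < key y}"
proof -
  have FU: "F \<subseteq> U" and not_P_F: "\<not> P F"
    and P_above: "\<And>F'. F \<subset> F' \<Longrightarrow> F' \<subseteq> U \<Longrightarrow> P F'"
    using F unfolding maximal_false_def by auto
  have "U - F \<noteq> {}" using FU not_P_F P_U by auto
  then obtain j where j: "j \<in> U - F" and j_last: "\<forall>y\<in>U - F. key y \<le> key j"
    using ex_greatest_key[of "U - F" key] fin by auto
  define A where "A = {x\<in>F. key x < key j}"
  have F_eq: "F = A \<union> {y\<in>U. key j < key y}"
  proof
    show "F \<subseteq> A \<union> {y\<in>U. key j < key y}"
    proof
      fix x assume x: "x \<in> F"
      then have "key x \<noteq> key j" using j FU inj by (auto dest: inj_onD)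
      then show "x \<in> A \<union> {y\<in>U. key j < key y}"
        using x FU unfolding A_def by (auto simp: neq_iff)
    qed
    show "A \<union> {y\<in>U. key j < key y} \<subseteq> F"
      using j_last unfolding A_def by (auto simp: not_le[symmetric])
  qed
  \<comment> \<open>\<open>j\<close> is the last element outside \<open>F\<close>; a minimal member between \<open>insert j A\<close> and
     \<open>insert j F\<close> becomes false when its last element is dropped.\<close>
  define Cands where "Cands = {T. insert j A \<subseteq> T \<and> T \<subseteq> insert j F \<and> P T}"
  have "insert j F \<in> Cands" using P_above[of "insert j F"] j FU unfolding Cands_def A_def by auto
  moreover have "Cands \<subseteq> Pow U" using FU j unfolding Cands_def by auto
  then have "finite Cands" using fin by (simp add: finite_subset)
  ultimately obtain T where T: "T \<in> Cands" and T_min: "\<forall>T'\<in>Cands. T' \<subseteq> T \<longrightarrow> T = T'"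
    using finite_has_minimal[of Cands] by blast
  have TU: "T \<subseteq> U" and jT: "j \<in> T" and AT: "A \<subseteq> T" and TF: "T \<subseteq> insert j F" and P_T: "P T"
    using T j FU unfolding Cands_def by auto
  have "finite T" using finite_subset[OF TU fin] .
  then obtain k where k: "k \<in> T" "\<forall>x\<in>T. key x \<le> key k"
    using ex_greatest_key[of T key] jT by blast
  have "\<not> P (T - {k})"
  proof
    assume P_Tk: "P (T - {k})"
    show False
    proof (cases "k = j")
      case True
      then have "T - {k} \<subseteq> F" using TF by blast
      then show False using up_closedD[OF up P_Tk] FU not_P_F by blast
    next
      case False
      then have "key j \<noteq> key k" using inj jT k(1) TU by (auto dest: inj_onD)
      then have "key j < key k" using k(2) jT by (simp add: le_neq_trans)
      then have "T - {k} \<in> Cands" using P_Tk AT jT TF unfolding Cands_def A_def by auto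
      then show False using T_min k(1) by blast
    qed
  qed
  then have "minimal_true U P T" using minimal_trueI_regular[OF up reg inj TU P_T k] by blast
  moreover have "{x\<in>T. key x < key j} = A" using AT TF unfolding A_def by auto
  ultimately show ?thesis using jT F_eq by blast
qed

lemma card_maximal_false_le:
  fixes key :: "'a \<Rightarrow> 'b::linorder"
  assumes fin: "finite U" and inj: "inj_on key U" and up: "up_closed U P"
    and reg: "regular U key P" and P_U: "P U"
    and bound: "\<And>T. minimal_true U P T \<Longrightarrow> card T \<le> m"
  shows "card {F. maximal_false U P F} \<le> m * card {T. minimal_true U P T}"
proof -
  define M where "M = {T. minimal_true U P T}"
  define code where "code = (\<lambda>(T, j). {x\<in>T. key x < key j} \<union> {y\<in>U. key j < key y})"
  have "M \<subseteq> Pow U" unfolding M_def minimal_true_def by auto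
  then have fin_M: "finite M" and fin_members: "\<forall>T\<in>M. finite T"
    using fin by (auto intro: finite_subset)
  have "{F. maximal_false U P F} \<subseteq> code ` (SIGMA T:M. T)"
  proof
    fix F assume "F \<in> {F. maximal_false U P F}"
    then obtain T j where "minimal_true U P T" "j \<in> T"
        "F = {x\<in>T. key x < key j} \<union> {y\<in>U. key j < key y}"
      using maximal_false_decomposition[OF fin inj up reg P_U] by blast
    then show "F \<in> code ` (SIGMA T:M. T)" unfolding code_def M_def by force
  qed
  then have "card {F. maximal_false U P F} \<le> card (code ` (SIGMA T:M. T))"
    using fin_M fin_members by (intro card_mono) auto
  also have "\<dots> \<le> card (SIGMA T:M. T)"
    using fin_M fin_members by (intro card_image_le) auto
  also have "\<dots> = (\<Sum>T\<in>M. card T)" using fin_M fin_members by simp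
  also have "\<dots> \<le> card M * m" using sum_bounded_above[of M card m] bound unfolding M_def by auto
  finally show ?thesis unfolding M_def by (simp add: mult.commute)
qed

lemma maximal_false_complement_iff:
  assumes "C \<subseteq> U"
  shows "maximal_false U P (U - C) \<longleftrightarrow> minimal_true U (dual_family U P) C"
proof
  assume F: "maximal_false U P (U - C)"
  have "\<not> dual_family U P C'" if "C' \<subset> C" for C'
  proof -
    have "U - C \<subset> U - C'" using that assms by blast
    then show ?thesis using F that unfolding maximal_false_def dual_family_def by blast
  qed
  then show "minimal_true U (dual_family U P) C"
    using F assms unfolding maximal_false_def minimal_true_def dual_family_def by blast
next
  assume T: "minimal_true U (dual_family U P) C"
  have "P F'" if "U - C \<subset> F'" "F' \<subseteq> U" for F'
  proof -
    have "U - F' \<subset> C" using that assms by blast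
    then have "\<not> dual_family U P (U - F')" using T unfolding minimal_true_def by blast
    then show ?thesis using that by (simp add: dual_family_def double_diff)
  qed
  then show "maximal_false U P (U - C)"
    using T unfolding maximal_false_def minimal_true_def dual_family_def by blast
qed

lemma card_maximal_false_eq_card_minimal_dual:
  "card {F. maximal_false U P F} = card {C. minimal_true U (dual_family U P) C}"
proof -
  have "bij_betw (\<lambda>C. U - C) {C. minimal_true U (dual_family U P) C} {F. maximal_false U P F}"
  proof (rule bij_betw_byWitness[where f' = "\<lambda>F. U - F"])
    show "\<forall>C\<in>{C. minimal_true U (dual_family U P) C}. U - (U - C) = C"
      unfolding minimal_true_def by auto
    show "\<forall>F\<in>{F. maximal_false U P F}. U - (U - F) = F"
      unfolding maximal_false_def by auto
    show "(\<lambda>C. U - C) ` {C. minimal_true U (dual_family U P) C} \<subseteq> {F. maximal_false U P F}"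
    proof clarify
      fix C assume "minimal_true U (dual_family U P) C"
      moreover have "C \<subseteq> U" using calculation unfolding minimal_true_def by blast
      ultimately show "maximal_false U P (U - C)" using maximal_false_complement_iff by blast
    qed
    show "(\<lambda>F. U - F) ` {F. maximal_false U P F} \<subseteq> {C. minimal_true U (dual_family U P) C}"
    proof clarify
      fix F assume F: "maximal_false U P F"
      then have "U - (U - F) = F" unfolding maximal_false_def by blast
      then show "minimal_true U (dual_family U P) (U - F)"
        using F maximal_false_complement_iff[of "U - F" U P] by simp
    qed
  qed
  then show ?thesis by (simp add: bij_betw_same_card)
qed

lemma dual_family_dual_family:
  assumes "\<And>S. P S \<Longrightarrow> S \<subseteq> U"
  shows "dual_family U (dual_family U P) = P"
  using assms by (auto simp: fun_eq_iff dual_family_def double_diff)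

lemma up_closed_dual_family: "up_closed U P \<Longrightarrow> up_closed U (dual_family U P)"
  unfolding up_closed_def dual_family_def by (meson Diff_mono Diff_subset order_refl)

lemma regular_dual_family:
  assumes reg: "regular U key P"
  shows "regular U key (dual_family U P)"
  unfolding regular_def
proof (intro allI impI)
  fix S x y
  assume S: "S \<subseteq> U" "dual_family U P S" "x \<in> S" "y \<in> U" "y \<notin> S" "key y < key x"
  let ?S' = "insert y (S - {x})"
  have "\<not> P (U - ?S')"
  proof
    assume "P (U - ?S')"
    then have "P (insert y (U - ?S' - {x}))"
      using regularD[OF reg, of "U - ?S'" x y] S by blast
    also have "insert y (U - ?S' - {x}) = U - S" using S by blast
    finally show False using S(2) unfolding dual_family_def by blast
  qed
  then show "dual_family U P ?S'" using S unfolding dual_family_def by blast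
qed

lemma card_minimal_dual_le:
  fixes key :: "'a \<Rightarrow> 'b::linorder"
  assumes "finite U" "inj_on key U" "up_closed U P" "regular U key P" "P U"
    and "\<And>T. minimal_true U P T \<Longrightarrow> card T \<le> m"
  shows "card {C. minimal_true U (dual_family U P) C} \<le> m * card {T. minimal_true U P T}"
  using card_maximal_false_le[OF assms] card_maximal_false_eq_card_minimal_dual by metis

lemma minimal_true_iff_minimal_generator:
  assumes R_sub: "\<And>D. R D \<Longrightarrow> D \<subseteq> U"
    and P_iff: "\<And>C. C \<subseteq> U \<Longrightarrow> P C \<longleftrightarrow> (\<exists>D\<subseteq>C. R D)"
  shows "minimal_true U P C \<longleftrightarrow> R C \<and> (\<forall>D. D \<subset> C \<longrightarrow> \<not> R D)"
proof
  assume min: "minimal_true U P C"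
  then have CU: "C \<subseteq> U" and "P C" and no_smaller: "\<And>C'. C' \<subset> C \<Longrightarrow> \<not> P C'"
    unfolding minimal_true_def by auto
  obtain D where D: "D \<subseteq> C" "R D" using P_iff[OF CU] \<open>P C\<close> by blast
  have smaller_not_R: "\<not> R D'" if "D' \<subset> C" for D'
  proof
    assume "R D'"
    moreover have "D' \<subseteq> U" using that CU by blast
    ultimately have "P D'" using P_iff[of D'] by blast
    then show False using no_smaller[OF that] by blast
  qed
  then have "D = C" using D by blast
  then show "R C \<and> (\<forall>D. D \<subset> C \<longrightarrow> \<not> R D)" using D(2) smaller_not_R by blast
next
  assume C: "R C \<and> (\<forall>D. D \<subset> C \<longrightarrow> \<not> R D)"
  then have CU: "C \<subseteq> U" using R_sub by blast
  have "P C" using P_iff[OF CU] C by blast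
  moreover have "\<not> P C'" if "C' \<subset> C" for C'
  proof
    assume "P C'"
    moreover have "C' \<subseteq> U" using that CU by blast
    ultimately obtain D where "D \<subseteq> C'" "R D" using P_iff[of C'] by blast
    then show False using C that by blast
  qed
  ultimately show "minimal_true U P C" using CU unfolding minimal_true_def by blast
qed

lemma regular_threshold:
  fixes key :: "'a \<Rightarrow> 'b::linorder" and w :: "'a \<Rightarrow> real"
  assumes fin: "finite U" and thr: "\<forall>S. S \<subseteq> U \<longrightarrow> (t \<le> (\<Sum>x\<in>S. w x) \<longleftrightarrow> P S)"
    and key_w: "\<And>x y. key y < key x \<Longrightarrow> w x \<le> w y"
  shows "regular U key P"
  unfolding regular_def
proof (intro allI impI)
  fix S x y assume S: "S \<subseteq> U" "P S" "x \<in> S" "y \<in> U" "y \<notin> S" "key y < key x"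
  have "finite S" using S(1) fin by (rule finite_subset)
  then have "(\<Sum>z\<in>insert y (S - {x}). w z) = w y + ((\<Sum>z\<in>S. w z) - w x)"
    using S(3,5) by (simp add: sum_diff1)
  moreover have "t \<le> (\<Sum>z\<in>S. w z)" using thr S(1,2) by blast
  ultimately have "t \<le> (\<Sum>z\<in>insert y (S - {x}). w z)" using key_w[OF S(6)] by linarith
  moreover have "insert y (S - {x}) \<subseteq> U" using S by blast
  ultimately show "P (insert y (S - {x}))" using thr by blast
qed

section \<open>Connected dominating sets and cutsets\<close>

lemma simple_graph_symp: "simple_graph V E \<Longrightarrow> symp E"
  unfolding simple_graph_def symp_def by blast

abbreviation induced_adj :: "('a \<Rightarrow> 'a \<Rightarrow> bool) \<Rightarrow> 'a set \<Rightarrow> 'a \<Rightarrow> 'a \<Rightarrow> bool" where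
  "induced_adj E S \<equiv> \<lambda>u v. E u v \<and> u \<in> S \<and> v \<in> S"

lemma induced_path_sym:
  assumes "symp E" "(induced_adj E S)\<^sup>*\<^sup>* x y"
  shows "(induced_adj E S)\<^sup>*\<^sup>* y x"
proof -
  have "symp (induced_adj E S)" using assms(1) unfolding symp_def by blast
  then have "symp (induced_adj E S)\<^sup>*\<^sup>*" by (rule symp_rtranclp)
  then show ?thesis using assms(2) by (rule sympD)
qed

lemma induced_path_mono:
  assumes "(induced_adj E S)\<^sup>*\<^sup>* x y" "S \<subseteq> S'"
  shows "(induced_adj E S')\<^sup>*\<^sup>* x y"
  using assms(1)
  by (induction rule: rtranclp_induct) (use assms(2) in \<open>auto intro: rtranclp.rtrancl_into_rtrancl\<close>)

lemma induced_path_crosses: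
  assumes "(induced_adj E S)\<^sup>*\<^sup>* x y" "x \<in> X" "y \<notin> X"
  shows "\<exists>a b. E a b \<and> a \<in> S \<and> b \<in> S \<and> a \<in> X \<and> b \<notin> X"
  using assms
proof (induction rule: rtranclp_induct)
  case (step y z)
  then show ?case by (cases "y \<in> X") auto
qed simp

lemma not_induced_connected_if_separated:
  assumes "x \<in> S" "y \<in> S" "x \<in> X" "y \<notin> X"
    and "\<forall>a\<in>S \<inter> X. \<forall>b\<in>S - X. \<not> E a b"
  shows "\<not> induced_connected E S"
proof
  assume "induced_connected E S"
  then have "(induced_adj E S)\<^sup>*\<^sup>* x y"
    using assms(1,2) unfolding induced_connected_def by simp
  then obtain a b where "E a b" "a \<in> S" "b \<in> S" "a \<in> X" "b \<notin> X"
    using induced_path_crosses[OF _ assms(3,4)] by blast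
  then show False using assms(5) by blast
qed

lemma induced_connected_extend:
  assumes sym: "symp E" and conn: "induced_connected E S" and "S \<subseteq> S'"
    and adj: "\<forall>x\<in>S' - S. \<exists>u\<in>S. E x u"
  shows "induced_connected E S'"
proof -
  have reach: "\<exists>z\<in>S. (induced_adj E S')\<^sup>*\<^sup>* x z" if "x \<in> S'" for x
  proof (cases "x \<in> S")
    case False
    then have "x \<in> S' - S" using that by blast
    then obtain u where u: "u \<in> S" "E x u" using adj by blast
    then have "induced_adj E S' x u" using that \<open>S \<subseteq> S'\<close> by blast
    then show ?thesis using u(1) by (intro bexI[of _ u] r_into_rtranclp)
  qed (intro bexI[of _ x] rtranclp.rtrancl_refl)
  show ?thesis unfolding induced_connected_def
  proof (intro conjI ballI)
    show "S' \<noteq> {}" using conn \<open>S \<subseteq> S'\<close> unfolding induced_connected_def by blast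
    fix x y assume "x \<in> S'" "y \<in> S'"
    then obtain zx zy where z: "zx \<in> S" "zy \<in> S"
      and x_zx: "(induced_adj E S')\<^sup>*\<^sup>* x zx" and y_zy: "(induced_adj E S')\<^sup>*\<^sup>* y zy"
      using reach by meson
    have "(induced_adj E S)\<^sup>*\<^sup>* zx zy" using conn z unfolding induced_connected_def by simp
    then have "(induced_adj E S')\<^sup>*\<^sup>* zx zy" using \<open>S \<subseteq> S'\<close> by (rule induced_path_mono)
    moreover have "(induced_adj E S')\<^sup>*\<^sup>* zy y" using induced_path_sym[OF sym y_zy] .
    ultimately show "(induced_adj E S')\<^sup>*\<^sup>* x y" using x_zx by (meson rtranclp_trans)
  qed
qed

text \<open>A maximal connected proper subset containing \<open>a\<close> misses exactly one vertex.\<close>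

lemma ex_non_separating_vertex:
  assumes sym: "symp E" and fin: "finite S" and conn: "induced_connected E S"
    and "a \<in> S" "b \<in> S" "b \<noteq> a"
  shows "\<exists>v\<in>S. v \<noteq> a \<and> induced_connected E (S - {v})"
proof -
  define XX where "XX = {X. X \<subset> S \<and> a \<in> X \<and> induced_connected E X}"
  have "{a} \<in> XX" unfolding XX_def induced_connected_def using assms by auto
  moreover have "XX \<subseteq> Pow S" unfolding XX_def by blast
  then have "finite XX" using fin by (simp add: finite_subset)
  ultimately obtain X where X: "X \<in> XX" and X_max: "\<forall>Y\<in>XX. X \<subseteq> Y \<longrightarrow> X = Y"
    using finite_has_maximal[of XX] by blast
  have X_sub: "X \<subset> S" and aX: "a \<in> X" and X_conn: "induced_connected E X"
    using X unfolding XX_def by auto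
  obtain v where v: "v \<in> S" "v \<notin> X" using X_sub by blast
  have "S - X = {v}"
  proof (rule ccontr)
    assume "S - X \<noteq> {v}"
    have "(induced_adj E S)\<^sup>*\<^sup>* a v" using conn aX v X_sub unfolding induced_connected_def by auto
    then obtain p q where pq: "E p q" "q \<in> S" "p \<in> X" "q \<notin> X"
      using induced_path_crosses[OF _ aX v(2)] by blast
    obtain y where y: "y \<in> S - X" "y \<noteq> q" using \<open>S - X \<noteq> {v}\<close> v by blast
    have "\<forall>x\<in>insert q X - X. \<exists>u\<in>X. E x u" using pq sym by (auto dest: sympD)
    then have "induced_connected E (insert q X)"
      using induced_connected_extend[OF sym X_conn, of "insert q X"] by blast
    moreover have "insert q X \<subset> S" using y pq(2) X_sub by blast
    ultimately have "insert q X \<in> XX" using aX by (simp add: XX_def)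
    then show False using X_max pq(4) by blast
  qed
  then have "X = S - {v}" using X_sub by blast
  then show ?thesis using v aX X_conn by auto
qed

lemma cds_subset: "connected_dominating_set V E S \<Longrightarrow> S \<subseteq> V"
  unfolding connected_dominating_set_def dominating_def by blast

lemma up_closed_cds:
  assumes "simple_graph V E"
  shows "up_closed V (connected_dominating_set V E)"
  unfolding up_closed_def
proof (intro allI impI)
  fix S S' assume S: "connected_dominating_set V E S" and "S \<subseteq> S'" "S' \<subseteq> V"
  have dom: "\<forall>v\<in>V - S. \<exists>u\<in>S. E v u"
    using S unfolding connected_dominating_set_def dominating_def by blast
  then have "dominating V E S'" unfolding dominating_def using \<open>S \<subseteq> S'\<close> \<open>S' \<subseteq> V\<close> by blast
  moreover have "induced_connected E S'"
    using induced_connected_extend[OF simple_graph_symp[OF assms] _ \<open>S \<subseteq> S'\<close>] S dom \<open>S' \<subseteq> V\<close>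
    unfolding connected_dominating_set_def by blast
  ultimately show "connected_dominating_set V E S'" unfolding connected_dominating_set_def by blast
qed

lemma cds_remove_vertex:
  assumes irrefl: "\<forall>x. \<not> E x x" and cds: "connected_dominating_set V E S" and "v \<in> S"
    and conn: "induced_connected E (S - {v})" and dom: "\<forall>z\<in>V - S. \<exists>u\<in>S - {v}. E z u"
  shows "connected_dominating_set V E (S - {v})"
proof -
  obtain a where a: "a \<in> S - {v}" using conn unfolding induced_connected_def by blast
  have "(induced_adj E S)\<^sup>*\<^sup>* v a"
    using cds \<open>v \<in> S\<close> a unfolding connected_dominating_set_def induced_connected_def by auto
  then obtain u where "induced_adj E S v u"
    by (cases rule: converse_rtranclpE) (use a in auto)
  then have u: "u \<in> S - {v}" "E v u" using irrefl by auto
  have "dominating V E (S - {v})"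
    unfolding dominating_def
  proof (intro conjI ballI)
    show "S - {v} \<subseteq> V" using cds_subset[OF cds] by blast
    fix z assume "z \<in> V - (S - {v})"
    then show "\<exists>u\<in>S - {v}. E z u" using u dom by (cases "z = v") auto
  qed
  then show ?thesis using conn unfolding connected_dominating_set_def by blast
qed

lemma cds_small_complement_hub:
  assumes sg: "simple_graph V E" and nc: "\<not> complete_graph V E"
    and cds: "connected_dominating_set V E S" and small: "\<forall>x\<in>V - S. \<forall>y\<in>V - S. x = y"
  shows "\<exists>a\<in>S. \<exists>b\<in>S. b \<noteq> a \<and> (\<forall>z\<in>V - S. E z a)"
proof -
  obtain p q where pq: "p \<in> V" "q \<in> V" "p \<noteq> q" "\<not> E p q"
    using nc unfolding complete_graph_def by blast
  show ?thesis
  proof (cases "V - S = {}")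
    case True
    then show ?thesis using pq by blast
  next
    case False
    then obtain x where "x \<in> V - S" by blast
    then have x: "V - S = {x}" using small by blast
    then obtain a where a: "a \<in> S" "E x a"
      using cds unfolding connected_dominating_set_def dominating_def by blast
    have "\<forall>z\<in>V - S. E z a" using x a(2) by simp
    moreover have "\<exists>b\<in>S. b \<noteq> a"
    proof (rule ccontr)
      assume "\<not> (\<exists>b\<in>S. b \<noteq> a)"
      then have "V \<subseteq> {a, x}" using x by blast
      then have "(p = a \<and> q = x) \<or> (p = x \<and> q = a)" using pq(1-3) by blast
      moreover have "E a x" using a(2) simple_graph_symp[OF sg] by (blast dest: sympD)
      ultimately show False using pq(4) a(2) by blast
    qed
    ultimately show ?thesis using a(1) by blast
  qed
qed

lemma minimal_cds_misses_two_vertices: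
  assumes sg: "simple_graph V E" and nc: "\<not> complete_graph V E" and min: "minimal_cds V E S"
  shows "\<exists>x\<in>V - S. \<exists>y\<in>V - S. x \<noteq> y"
proof (rule ccontr)
  assume "\<not> (\<exists>x\<in>V - S. \<exists>y\<in>V - S. x \<noteq> y)"
  then have small: "\<forall>x\<in>V - S. \<forall>y\<in>V - S. x = y" by blast
  have cds: "connected_dominating_set V E S" using min unfolding minimal_cds_def by blast
  obtain a b where ab: "a \<in> S" "b \<in> S" "b \<noteq> a" and hub: "\<forall>z\<in>V - S. E z a"
    using cds_small_complement_hub[OF sg nc cds small] by blast
  have "finite S" using sg cds_subset[OF cds] unfolding simple_graph_def by (blast intro: finite_subset)
  moreover have "induced_connected E S" using cds unfolding connected_dominating_set_def by blast
  ultimately obtain v where v: "v \<in> S" "v \<noteq> a" "induced_connected E (S - {v})"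
    using ex_non_separating_vertex[OF simple_graph_symp[OF sg] _ _ ab] by blast
  have "\<forall>z\<in>V - S. \<exists>u\<in>S - {v}. E z u" using hub ab(1) v(2) by blast
  then have "connected_dominating_set V E (S - {v})"
    using cds_remove_vertex[OF _ cds v(1) v(3)] sg unfolding simple_graph_def by blast
  then show False using min v(1) unfolding minimal_cds_def by blast
qed

lemma card_le_card_minus_two:
  assumes "finite V" "S \<subseteq> V" "x \<in> V - S" "y \<in> V - S" "x \<noteq> y"
  shows "card S \<le> card V - 2"
proof -
  have "2 \<le> card (V - S)"
    using card_mono[of "V - S" "{x, y}"] assms by auto
  moreover have "card (V - S) = card V - card S"
    using assms by (simp add: card_Diff_subset finite_subset)
  moreover have "card S \<le> card V" using assms by (simp add: card_mono)
  ultimately show ?thesis by linarith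
qed

lemma card_minimal_cds_le:
  assumes "simple_graph V E" "\<not> complete_graph V E" "minimal_cds V E S"
  shows "card S \<le> card V - 2"
proof -
  have "finite V" using assms(1) unfolding simple_graph_def by blast
  moreover have "S \<subseteq> V" using assms(3) cds_subset unfolding minimal_cds_def by blast
  ultimately show ?thesis
    using minimal_cds_misses_two_vertices[OF assms] card_le_card_minus_two by metis
qed

lemma card_minimal_cutset_le:
  assumes sg: "simple_graph V E" and "minimal_cutset V E C"
  shows "card C \<le> card V - 2"
proof -
  have C: "C \<subseteq> V" "V - C \<noteq> {}" "\<not> induced_connected E (V - C)"
    using assms(2) unfolding minimal_cutset_def cutset_def by auto
  then obtain x where x: "x \<in> V - C" by blast
  have "induced_connected E {x}" unfolding induced_connected_def by simp
  then have "V - C \<noteq> {x}" using C(3) by metis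
  then obtain y where "y \<in> V - C" "y \<noteq> x" using x by blast
  then show ?thesis using card_le_card_minus_two[OF _ C(1) x] sg unfolding simple_graph_def by blast
qed

lemma cutset_complement_nonadjacent:
  assumes "p \<in> V" "q \<in> V" "p \<noteq> q" "\<not> E p q"
  shows "cutset V E (V - {p, q})"
proof -
  have "V - (V - {p, q}) = {p, q}" using assms by blast
  moreover have "\<not> induced_connected E {p, q}"
    using not_induced_connected_if_separated[of p "{p, q}" q "{p}" E] assms by blast
  ultimately show ?thesis unfolding cutset_def by simp
qed

lemma cutset_isolating_vertex:
  assumes "C \<subseteq> V" "v \<in> C" "z \<in> V - C" "\<forall>u\<in>V - C. \<not> E v u"
  shows "cutset V E (C - {v})"
proof -
  have "\<not> induced_connected E (V - (C - {v}))"
    using not_induced_connected_if_separated[of v "V - (C - {v})" z "{v}" E] assms by blast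
  then show ?thesis using assms unfolding cutset_def by blast
qed

lemma not_cds_complement_iff_contains_cutset:
  assumes sg: "simple_graph V E" and nc: "\<not> complete_graph V E" and CV: "C \<subseteq> V"
  shows "\<not> connected_dominating_set V E (V - C) \<longleftrightarrow> (\<exists>D\<subseteq>C. cutset V E D)"
proof
  assume not_cds: "\<not> connected_dominating_set V E (V - C)"
  consider "V - C = {}" | "V - C \<noteq> {}" "\<not> induced_connected E (V - C)"
    | "induced_connected E (V - C)" by blast
  then show "\<exists>D\<subseteq>C. cutset V E D"
  proof cases
    case 1
    obtain p q where "p \<in> V" "q \<in> V" "p \<noteq> q" "\<not> E p q"
      using nc unfolding complete_graph_def by blast
    then have "cutset V E (V - {p, q})" by (rule cutset_complement_nonadjacent)
    moreover have "V - {p, q} \<subseteq> C" using 1 by blast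
    ultimately show ?thesis by blast
  next
    case 2
    then show ?thesis using CV unfolding cutset_def by blast
  next
    case 3
    then have "\<not> dominating V E (V - C)"
      using not_cds unfolding connected_dominating_set_def by blast
    then obtain v where "v \<in> C" "\<forall>u\<in>V - C. \<not> E v u"
      using CV unfolding dominating_def by auto
    moreover obtain z where "z \<in> V - C" using 3 unfolding induced_connected_def by auto
    ultimately have "cutset V E (C - {v})" using cutset_isolating_vertex[OF CV] by blast
    then show ?thesis by blast
  qed
next
  assume "\<exists>D\<subseteq>C. cutset V E D"
  then obtain D where D: "D \<subseteq> C" "cutset V E D" by blast
  show "\<not> connected_dominating_set V E (V - C)"
  proof
    assume "connected_dominating_set V E (V - C)"
    moreover have "V - C \<subseteq> V - D" using D(1) by blast
    ultimately have "connected_dominating_set V E (V - D)"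
      using up_closedD[OF up_closed_cds[OF sg]] by blast
    then show False using D(2) unfolding cutset_def connected_dominating_set_def by blast
  qed
qed

lemma minimal_true_dual_cds_iff_minimal_cutset:
  assumes "simple_graph V E" "\<not> complete_graph V E"
  shows "minimal_true V (dual_family V (connected_dominating_set V E)) C \<longleftrightarrow> minimal_cutset V E C"
  unfolding minimal_cutset_def
proof (rule minimal_true_iff_minimal_generator)
  show "D \<subseteq> V" if "cutset V E D" for D using that unfolding cutset_def by blast
  show "dual_family V (connected_dominating_set V E) C' \<longleftrightarrow> (\<exists>D\<subseteq>C'. cutset V E D)"
    if "C' \<subseteq> V" for C'
    using not_cds_complement_iff_contains_cutset[OF assms that] that
    unfolding dual_family_def by blast
qed

lemma minimal_true_cds_iff_minimal_cds:
  "minimal_true V (connected_dominating_set V E) S \<longleftrightarrow> minimal_cds V E S"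
  unfolding minimal_true_def minimal_cds_def using cds_subset by blast

theorem mainTheorem15:
  fixes V :: "'a set" and E :: "'a \<Rightarrow> 'a \<Rightarrow> bool" and n :: nat
  assumes "simple_graph V E"
    and "connected_graph V E"
    and "card V = n"
    and "connected_domishold V E"
    and "\<not> complete_graph V E"
  shows "card {S. minimal_cutset V E S} \<le> (n - 2) * card {S. minimal_cds V E S}
       \<and> card {S. minimal_cds V E S} \<le> (n - 2) * card {S. minimal_cutset V E S}"
proof -
  let ?P = "connected_dominating_set V E" and ?Q = "dual_family V (connected_dominating_set V E)"
  have fin: "finite V" using assms(1) unfolding simple_graph_def by blast
  obtain w :: "'a \<Rightarrow> real" and t
    where thr: "\<forall>S. S \<subseteq> V \<longrightarrow> (t \<le> (\<Sum>x\<in>S. w x) \<longleftrightarrow> ?P S)"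
    using assms(4) unfolding connected_domishold_def by blast
  obtain r :: "'a \<Rightarrow> nat" where r: "inj_on r V" using finite_imp_inj_to_nat_seg[OF fin] by blast
  define key where "key x = (- w x, r x)" for x
  have inj: "inj_on key V" using r unfolding key_def inj_on_def by auto
  have reg_P: "regular V key ?P"
    by (rule regular_threshold[OF fin thr]) (auto simp: key_def less_prod_def)
  have up_P: "up_closed V ?P" using assms(1) by (rule up_closed_cds)
  have P_V: "?P V" and Q_V: "?Q V"
    using assms(2) unfolding connected_graph_def connected_dominating_set_def dominating_def
      dual_family_def induced_connected_def by auto
  have bound_P: "card T \<le> n - 2" if "minimal_true V ?P T" for T
    using that card_minimal_cds_le[OF assms(1,5)] assms(3)
    by (simp add: minimal_true_cds_iff_minimal_cds)
  have bound_Q: "card T \<le> n - 2" if "minimal_true V ?Q T" for T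
    using that card_minimal_cutset_le[OF assms(1)] assms(3)
    by (simp add: minimal_true_dual_cds_iff_minimal_cutset[OF assms(1,5)])
  have "dual_family V ?Q = ?P" using dual_family_dual_family cds_subset by metis
  then show ?thesis
    using card_minimal_dual_le[OF fin inj up_P reg_P P_V bound_P]
      card_minimal_dual_le[OF fin inj up_closed_dual_family[OF up_P] regular_dual_family[OF reg_P]
        Q_V bound_Q]
    by (simp add: minimal_true_cds_iff_minimal_cds minimal_true_dual_cds_iff_minimal_cutset[OF assms(1,5)])
qed

end
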